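(* In the setting of the context, assume (G1) and (G2). 1. If (G3) holds, then ($\overline{G}_3$) holds. 2. If $X_0\neq X$ and ($\overline{G}_3$) holds, then (G3) holds. Here (G3): there exists $c_2\ge1$ such that $\operatorname{cap}U(x,r)\ge c_2^{-1}g(r)^{-1}$ for all $x\in X_0$ and $0<r<R_0(x)$; and ($\overline G_3$): there exists $c_2\ge1$ such that for all $x\in X_0$, $0<r<R_0(x)$ and $y\in X\setminus U(x,r)$, $\|\varepsilon_y^{\overline{U(x,r)}}\|\ge c_2^{-1}g(r)^{-1}G(y,x)$.
   Context: $(X,\rho)$ is a separable metric space, $X_0\subseteq X$ open; $\mathcal M(X)$ is the set of finite Borel measures (extended to universally measurable sets), $\|\mu\|:=\mu(X)$, $\varepsilon_x$ the Dirac measure. For every open $U\subseteq X$ and $x\in X$ a measure $\mu_x^U\in\mathcal M(X)$ is given such that for all open $U,V$ and all $x$: $\mu_x^U(U)=0$, $\|\mu_x^U\|\le1$, $\mu_x^U=\varepsilon_x$ if $x\notin U$; $y\mapsto\mu_y^U(E)$ is universally measurable for Borel $E$; and $\mu_x^U=\int\mu_y^U\,d\mu_x^V(y)$ if $V\subseteq U$. For closed $A$, $\varepsilon_x^A:=\mu_x^{X\setminus A}$. $\mathcal U(X_0)$ is the set of open $U$ with $\overline U\subseteq X_0$; $U(x,r)$ the open ball; $R_0(x):=\sup\{r>0:\overline{U(x,r)}\subseteq X_0\}$ for $x\in X_0$. $G\colon X\times X\to(0,\infty]$ is Borel, $G\mu(x):=\int G(x,y)\,d\mu(y)$, and $\operatorname{cap}A:=\sup\{\|\mu\|:\mu\in\mathcal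 M(X),\ \mu(X\setminus A)=0,\ G\mu\le1\}$. (G1): there exists $c_1\ge1$ such that for all $U\in\mathcal U(X_0)$, $x\in U$, $\delta>0$ and every closed $A\subseteq U$ there are a closed neighborhood $B\subseteq U$ of $A$ and a measure $\nu$ carried by $B$ with $\|\varepsilon_x^B\|-\delta<c_1\|\varepsilon_x^A\|$ and $\|\varepsilon_y^A\|\le G\nu(y)\le c_1\|\varepsilon_y^B\|$ for all $y\in X$. (G2): there are a strictly decreasing continuous $g\colon[0,\infty)\to(0,\infty]$ and constants $c,c_D,M_0\in[1,\infty)$, $\alpha_0\in(0,1)$ such that for all $r>0$, $g(r/2)\le c_Dg(r)$, $M_0g(r)\le g(\alpha_0r)$, and $c^{-1}g\circ\rho\le G\le c\,g\circ\rho$ on $X\times X$. *)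

theory Defs
  imports "HOL-Analysis.Analysis" "HOL-Probability.Probability"
begin

text \<open>The space X is the whole type 'a (a separable = second countable metric space).
  Measures in M(X) are finite measures on the Borel sets of X; they are extended to
  universally measurable sets via their completion.\<close>

definition fin_borel :: "'a::topological_space measure \<Rightarrow> bool" where
  "fin_borel \<mu> \<longleftrightarrow> sets \<mu> = sets borel \<and> finite_measure \<mu>"

definition univ_meas_fun :: "('a::topological_space \<Rightarrow> ennreal) \<Rightarrow> bool" where
  "univ_meas_fun f \<longleftrightarrow> (\<forall>\<mu>. fin_borel \<mu> \<longrightarrow> f \<in> borel_measurable (completion \<mu>))"

definition mnorm :: "'a measure \<Rightarrow> real" where
  "mnorm \<mu> = measure \<mu> (space \<mu>)"

text \<open>Standing assumptions on the family \<mu>_x^U, written here as  mu U x.\<close>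
definition harmonic_kernel :: "('a::topological_space set \<Rightarrow> 'a \<Rightarrow> 'a measure) \<Rightarrow> bool" where
  "harmonic_kernel mu \<longleftrightarrow>
     (\<forall>U x. open U \<longrightarrow> fin_borel (mu U x)) \<and>
     (\<forall>U x. open U \<longrightarrow> emeasure (mu U x) U = 0) \<and>
     (\<forall>U x. open U \<longrightarrow> mnorm (mu U x) \<le> 1) \<and>
     (\<forall>U x. open U \<longrightarrow> x \<notin> U \<longrightarrow> mu U x = return borel x) \<and>
     (\<forall>U E. open U \<longrightarrow> E \<in> sets borel \<longrightarrow> univ_meas_fun (\<lambda>y. emeasure (mu U y) E)) \<and>
     (\<forall>U V x. open U \<longrightarrow> open V \<longrightarrow> V \<subseteq> U \<longrightarrow>
        (\<forall>E\<in>sets borel. emeasure (mu U x) E =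
            (\<integral>\<^sup>+ y. emeasure (mu U y) E \<partial>(completion (mu V x)))))"

definition swept :: "('a set \<Rightarrow> 'a \<Rightarrow> 'a measure) \<Rightarrow> 'a set \<Rightarrow> 'a \<Rightarrow> 'a measure" where
  "swept mu A x = mu (UNIV - A) x"

definition rel_compact_opens :: "'a::topological_space set \<Rightarrow> 'a set set" where
  "rel_compact_opens X0 = {U. open U \<and> closure U \<subseteq> X0}"

definition R0 :: "'a::metric_space set \<Rightarrow> 'a \<Rightarrow> ereal" where
  "R0 X0 x = Sup {ereal r | r. r > 0 \<and> closure (ball x r) \<subseteq> X0}"

definition Gpot :: "('a \<Rightarrow> 'a \<Rightarrow> ennreal) \<Rightarrow> 'a measure \<Rightarrow> 'a \<Rightarrow> ennreal" where
  "Gpot G \<mu> x = (\<integral>\<^sup>+ y. G x y \<partial>\<mu>)"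

text \<open>cap A = sup{\<parallel>\<mu>\<parallel> : \<mu> in M(X), \<mu>(X \ A) = 0, G\<mu> \<le> 1}; \<mu>(X \ A) = 0 is read
  for the extension of \<mu> (X \ A is contained in a Borel \<mu>-null set).\<close>
definition cap :: "('a::topological_space \<Rightarrow> 'a \<Rightarrow> ennreal) \<Rightarrow> 'a set \<Rightarrow> ennreal" where
  "cap G A = Sup {emeasure \<mu> (space \<mu>) | \<mu>. fin_borel \<mu> \<and>
       (\<exists>N\<in>sets borel. UNIV - A \<subseteq> N \<and> emeasure \<mu> N = 0) \<and> (\<forall>x. Gpot G \<mu> x \<le> 1)}"

definition G1 :: "('a::metric_space set \<Rightarrow> 'a \<Rightarrow> 'a measure) \<Rightarrow> ('a \<Rightarrow> 'a \<Rightarrow> ennreal) \<Rightarrow> 'a set \<Rightarrow> bool" where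
  "G1 mu G X0 \<longleftrightarrow> (\<exists>c1::real. c1 \<ge> 1 \<and>
     (\<forall>U\<in>rel_compact_opens X0. \<forall>x\<in>U. \<forall>\<delta>::real. \<delta> > 0 \<longrightarrow>
       (\<forall>A. closed A \<and> A \<subseteq> U \<longrightarrow>
         (\<exists>B \<nu>. closed B \<and> B \<subseteq> U \<and> A \<subseteq> interior B \<and>
            fin_borel \<nu> \<and> emeasure \<nu> (UNIV - B) = 0 \<and>
            mnorm (swept mu B x) - \<delta> < c1 * mnorm (swept mu A x) \<and>
            (\<forall>y. ennreal (mnorm (swept mu A y)) \<le> Gpot G \<nu> y \<and>
                 Gpot G \<nu> y \<le> ennreal (c1 * mnorm (swept mu B y)))))))"

definition G2 :: "('a::metric_space \<Rightarrow> 'a \<Rightarrow> ennreal) \<Rightarrow> (real \<Rightarrow> ennreal) \<Rightarrow> bool" where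
  "G2 G g \<longleftrightarrow>
     (\<forall>s t. 0 \<le> s \<and> s < t \<longrightarrow> g t < g s) \<and> continuous_on {0..} g \<and>
     (\<forall>t\<ge>0. g t > 0) \<and>
     (\<exists>c cD M0 \<alpha>0::real. c \<ge> 1 \<and> cD \<ge> 1 \<and> M0 \<ge> 1 \<and> 0 < \<alpha>0 \<and> \<alpha>0 < 1 \<and>
        (\<forall>r>0. g (r/2) \<le> ennreal cD * g r) \<and>
        (\<forall>r>0. ennreal M0 * g r \<le> g (\<alpha>0 * r)) \<and>
        (\<forall>x y. ennreal (1/c) * g (dist x y) \<le> G x y \<and> G x y \<le> ennreal c * g (dist x y)))"

definition G3 :: "('a::metric_space \<Rightarrow> 'a \<Rightarrow> ennreal) \<Rightarrow> (real \<Rightarrow> ennreal) \<Rightarrow> 'a set \<Rightarrow> bool" where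
  "G3 G g X0 \<longleftrightarrow> (\<exists>c2::real. c2 \<ge> 1 \<and>
     (\<forall>x\<in>X0. \<forall>r::real. 0 < r \<and> ereal r < R0 X0 x \<longrightarrow>
        cap G (ball x r) \<ge> ennreal (1/c2) * inverse (g r)))"

definition G3bar :: "('a::metric_space set \<Rightarrow> 'a \<Rightarrow> 'a measure) \<Rightarrow> ('a \<Rightarrow> 'a \<Rightarrow> ennreal) \<Rightarrow> (real \<Rightarrow> ennreal) \<Rightarrow> 'a set \<Rightarrow> bool" where
  "G3bar mu G g X0 \<longleftrightarrow> (\<exists>c2::real. c2 \<ge> 1 \<and>
     (\<forall>x\<in>X0. \<forall>r::real. 0 < r \<and> ereal r < R0 X0 x \<longrightarrow>
       (\<forall>y. y \<notin> ball x r \<longrightarrow>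
          ennreal (mnorm (swept mu (closure (ball x r)) y)) \<ge>
            ennreal (1/c2) * inverse (g r) * G y x)))"

end

theory Submission
  imports Defs
begin

text \<open>Both directions go through the measure \<nu> of (G1), whose potential lies between \<parallel>\<epsilon>^A\<parallel> and
  c1 \<parallel>\<epsilon>^B\<parallel> for a closed A inside a ball U containing the support B of \<nu>. As \<parallel>\<epsilon>_z^A\<parallel> = 1 on A,
  G\<nu> \<ge> 1 there, so Fubini and the quasi-symmetry of G give cap A \<lesssim> \<parallel>\<nu>\<parallel>; as G\<nu> \<le> c1, the measure
  \<nu>/c1 is admissible and \<parallel>\<nu>\<parallel> \<lesssim> cap U. For y outside the ball, the doubling property of g makes
  G\<nu>(y) comparable to G(y, x) \<parallel>\<nu>\<parallel>. With U = U(x, r) and A the closed ball of radius r/2 this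
  turns (G3) into (G3bar); with U = U(x, r/2), A the closed ball of radius r/4 and y \<notin> X_0,
  (G3bar) yields \<parallel>\<nu>\<parallel> \<greatersim> g(r/4)^{-1} \<approx> g(r)^{-1}, hence (G3).\<close>

lemma fin_borel_space: "fin_borel \<mu> \<Longrightarrow> space \<mu> = UNIV"
  unfolding fin_borel_def by (metis sets_eq_imp_space_eq space_borel)

lemma fin_borel_sets: "fin_borel \<mu> \<Longrightarrow> sets \<mu> = sets borel"
  unfolding fin_borel_def by simp

lemma emeasure_UNIV_eq_mnorm: "fin_borel \<mu> \<Longrightarrow> emeasure \<mu> UNIV = ennreal (mnorm \<mu>)"
  unfolding mnorm_def fin_borel_def
  by (metis finite_measure.emeasure_eq_measure sets_eq_imp_space_eq space_borel)

lemma ennreal_inverse_scale_le_iff: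
  assumes "0 < k"
  shows "ennreal (1/k) * a \<le> b \<longleftrightarrow> a \<le> ennreal k * b"
proof -
  have inv: "ennreal k * ennreal (1/k) = 1"
    using assms by (simp flip: ennreal_mult)
  have "ennreal (1/k) * a \<le> b \<longleftrightarrow> ennreal k * (ennreal (1/k) * a) \<le> ennreal k * b"
    using assms by (simp add: ennreal_mult_le_mult_iff)
  also have "\<dots> \<longleftrightarrow> a \<le> ennreal k * b"
    by (simp add: mult.assoc[symmetric] inv)
  finally show ?thesis .
qed

lemma ennreal_inverse_antimono:
  assumes "(a::ennreal) \<le> b"
  shows "inverse b \<le> inverse a"
proof (cases "a = 0 \<or> b = top")
  case False
  then have "a < top" "b < top"
    using assms by (auto simp: top.not_eq_extremum le_less_trans)
  then have a: "a = ennreal (enn2real a)" and b: "b = ennreal (enn2real b)"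
    by simp_all
  have "0 < enn2real a"
    using False \<open>a < top\<close> by (simp add: enn2real_positive_iff zero_less_iff_neq_zero)
  moreover have "enn2real a \<le> enn2real b"
    using assms \<open>b < top\<close> by (simp add: enn2real_mono)
  ultimately show ?thesis
    by (subst a, subst b) (simp add: inverse_ennreal le_imp_inverse_le)
qed auto

lemma AE_in_carrier:
  assumes "fin_borel \<nu>" "B \<in> sets borel" "emeasure \<nu> (UNIV - B) = 0"
  shows "AE w in \<nu>. w \<in> B"
  using assms by (intro AE_I'[of "UNIV - B"]) (auto simp: null_sets_def fin_borel_sets fin_borel_space)

lemma borel_measurable_pair_fin_borel:
  fixes G :: "'a::second_countable_topology \<Rightarrow> 'a \<Rightarrow> ennreal"
  assumes "case_prod G \<in> borel_measurable borel" "fin_borel \<mu>" "fin_borel \<nu>"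
  shows "case_prod G \<in> borel_measurable (\<mu> \<Otimes>\<^sub>M \<nu>)"
proof -
  have "sets (\<mu> \<Otimes>\<^sub>M \<nu>) = sets (borel \<Otimes>\<^sub>M borel)"
    by (rule sets_pair_measure_cong[OF fin_borel_sets[OF assms(2)] fin_borel_sets[OF assms(3)]])
  also have "\<dots> = sets (borel :: ('a \<times> 'a) measure)"
    by (simp only: borel_prod)
  finally show ?thesis
    using assms(1) measurable_cong_sets by blast
qed

lemma borel_measurable_kernel_section:
  fixes G :: "'a::second_countable_topology \<Rightarrow> 'a \<Rightarrow> ennreal"
  assumes "case_prod G \<in> borel_measurable borel" "fin_borel \<mu>"
  shows "G y \<in> borel_measurable \<mu>"
proof -
  have "case_prod G \<in> borel_measurable (borel \<Otimes>\<^sub>M borel)"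
    using assms(1) by (simp add: borel_prod)
  then have "(\<lambda>w. case_prod G (y, w)) \<in> borel_measurable borel"
    by (rule measurable_Pair2) simp
  moreover have "(borel_measurable \<mu> :: ('a \<Rightarrow> ennreal) set) = borel_measurable borel"
    by (rule measurable_cong_sets[OF fin_borel_sets[OF assms(2)] refl])
  ultimately show ?thesis by simp
qed

lemma Gpot_le_on_carrier:
  assumes "fin_borel \<nu>" "B \<in> sets borel" "emeasure \<nu> (UNIV - B) = 0"
    and "\<And>w. w \<in> B \<Longrightarrow> G y w \<le> a"
  shows "Gpot G \<nu> y \<le> a * emeasure \<nu> UNIV"
proof -
  have "Gpot G \<nu> y \<le> (\<integral>\<^sup>+w. a \<partial>\<nu>)"
    unfolding Gpot_def using AE_in_carrier[OF assms(1-3)]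
    by (intro nn_integral_mono_AE) (auto elim: AE_mp intro: assms(4))
  then show ?thesis
    by (simp add: fin_borel_space[OF assms(1)])
qed

lemma Gpot_ge_on_carrier:
  fixes G :: "'a::second_countable_topology \<Rightarrow> 'a \<Rightarrow> ennreal"
  assumes "case_prod G \<in> borel_measurable borel"
    and "fin_borel \<nu>" "B \<in> sets borel" "emeasure \<nu> (UNIV - B) = 0"
    and "\<And>w. w \<in> B \<Longrightarrow> a \<le> ennreal k * G y w"
  shows "a * emeasure \<nu> UNIV \<le> ennreal k * Gpot G \<nu> y"
proof -
  have "a * emeasure \<nu> UNIV = (\<integral>\<^sup>+w. a \<partial>\<nu>)"
    by (simp add: fin_borel_space[OF assms(2)])
  also have "\<dots> \<le> (\<integral>\<^sup>+w. ennreal k * G y w \<partial>\<nu>)"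
    using AE_in_carrier[OF assms(2-4)]
    by (intro nn_integral_mono_AE) (auto elim: AE_mp intro: assms(5))
  also have "\<dots> = ennreal k * Gpot G \<nu> y"
    unfolding Gpot_def
    by (rule nn_integral_cmult[OF borel_measurable_kernel_section[OF assms(1,2)]])
  finally show ?thesis .
qed

lemma cap_le_mass_if_potential_ge_1:
  fixes G :: "'a::second_countable_topology \<Rightarrow> 'a \<Rightarrow> ennreal"
  assumes Gm: "case_prod G \<in> borel_measurable borel" and \<nu>: "fin_borel \<nu>"
    and quasi_sym: "\<And>z w. G z w \<le> ennreal k * G w z"
    and ge_1: "\<And>z. z \<in> E \<Longrightarrow> 1 \<le> Gpot G \<nu> z"
  shows "cap G E \<le> ennreal k * emeasure \<nu> UNIV"
  unfolding cap_def
proof (rule Sup_least)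
  fix v assume "v \<in> {emeasure \<mu> (space \<mu>) |\<mu>. fin_borel \<mu> \<and>
      (\<exists>N\<in>sets borel. UNIV - E \<subseteq> N \<and> emeasure \<mu> N = 0) \<and> (\<forall>x. Gpot G \<mu> x \<le> 1)}"
  then obtain \<mu> N where v: "v = emeasure \<mu> (space \<mu>)" and \<mu>: "fin_borel \<mu>"
    and N: "N \<in> sets borel" "UNIV - E \<subseteq> N" "emeasure \<mu> N = 0"
    and Gpot_\<mu>: "\<And>x. Gpot G \<mu> x \<le> 1" by blast
  have "AE z in \<mu>. z \<in> E"
    using N by (intro AE_I'[of N]) (auto simp: null_sets_def fin_borel_sets[OF \<mu>])
  then have "(\<integral>\<^sup>+z. 1 \<partial>\<mu>) \<le> (\<integral>\<^sup>+z. Gpot G \<nu> z \<partial>\<mu>)"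
    by (intro nn_integral_mono_AE) (auto elim: AE_mp intro: ge_1)
  then have "v \<le> (\<integral>\<^sup>+z. Gpot G \<nu> z \<partial>\<mu>)"
    by (simp add: v)
  also have "\<dots> = (\<integral>\<^sup>+w. (\<integral>\<^sup>+z. G z w \<partial>\<mu>) \<partial>\<nu>)"
  proof -
    interpret pair_sigma_finite \<mu> \<nu>
      using \<mu> \<nu> by (intro pair_sigma_finite.intro) (auto simp: fin_borel_def finite_measure_def)
    show ?thesis
      unfolding Gpot_def using Fubini'[OF borel_measurable_pair_fin_borel[OF Gm \<mu> \<nu>]] by simp
  qed
  also have "\<dots> \<le> (\<integral>\<^sup>+w. ennreal k * Gpot G \<mu> w \<partial>\<nu>)"
    unfolding Gpot_def
    by (intro nn_integral_mono)
      (simp add: nn_integral_mono quasi_sym nn_integral_cmult[OF borel_measurable_kernel_section[OF Gm \<mu>], symmetric])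
  also have "\<dots> \<le> (\<integral>\<^sup>+w. ennreal k \<partial>\<nu>)"
    using mult_left_mono[OF Gpot_\<mu>, of "ennreal k"] by (intro nn_integral_mono) simp
  finally show "v \<le> ennreal k * emeasure \<nu> UNIV"
    by (simp add: fin_borel_space[OF \<nu>])
qed

lemma emeasure_le_cap_if_potential_bounded:
  fixes G :: "'a::second_countable_topology \<Rightarrow> 'a \<Rightarrow> ennreal"
  assumes Gm: "case_prod G \<in> borel_measurable borel" and \<nu>: "fin_borel \<nu>"
    and N: "N \<in> sets borel" "UNIV - E \<subseteq> N" "emeasure \<nu> N = 0"
    and bounded: "\<And>z. Gpot G \<nu> z \<le> ennreal k" and k: "0 < k"
  shows "emeasure \<nu> UNIV \<le> ennreal k * cap G E"
proof -
  define \<nu>' where "\<nu>' = scale_measure (ennreal (1/k)) \<nu>"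
  have mass: "emeasure \<nu>' (space \<nu>') = ennreal (1/k) * emeasure \<nu> UNIV"
    unfolding \<nu>'_def by (simp add: space_scale_measure fin_borel_space[OF \<nu>])
  have "fin_borel \<nu>'"
    unfolding fin_borel_def
  proof
    show "sets \<nu>' = sets borel"
      unfolding \<nu>'_def using fin_borel_sets[OF \<nu>] by simp
    have "emeasure \<nu> UNIV < \<top>"
      using \<nu> by (simp add: emeasure_UNIV_eq_mnorm)
    then show "finite_measure \<nu>'"
      by (intro finite_measureI) (simp add: mass ennreal_mult_eq_top_iff)
  qed
  moreover have "emeasure \<nu>' N = 0"
    unfolding \<nu>'_def using N by simp
  moreover have "Gpot G \<nu>' z \<le> 1" for z
  proof -
    have "Gpot G \<nu>' z = ennreal (1/k) * Gpot G \<nu> z"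
      unfolding Gpot_def \<nu>'_def
      by (rule nn_integral_scale_measure[OF borel_measurable_kernel_section[OF Gm \<nu>]])
    also have "\<dots> \<le> 1"
      using ennreal_inverse_scale_le_iff[OF k] bounded by simp
    finally show ?thesis .
  qed
  ultimately have "emeasure \<nu>' (space \<nu>') \<le> cap G E"
    unfolding cap_def using N by (intro Sup_upper) blast
  then show ?thesis
    using ennreal_inverse_scale_le_iff[OF k] by (simp add: mass)
qed

lemma harmonic_kernelD:
  assumes "harmonic_kernel mu" "open U"
  shows "fin_borel (mu U x)" and "mnorm (mu U x) \<le> 1"
    and "x \<notin> U \<Longrightarrow> mu U x = return borel x"
    and "open V \<Longrightarrow> V \<subseteq> U \<Longrightarrow> E \<in> sets borel \<Longrightarrow>
           emeasure (mu U x) E = (\<integral>\<^sup>+ y. emeasure (mu U y) E \<partial>completion (mu V x))"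
  using assms(1) unfolding harmonic_kernel_def by (elim conjE; meson assms(2))+

lemma mnorm_swept_le_1: "harmonic_kernel mu \<Longrightarrow> closed A \<Longrightarrow> mnorm (swept mu A y) \<le> 1"
  unfolding swept_def by (simp add: harmonic_kernelD(2) open_Diff)

lemma mnorm_swept_eq_1:
  assumes "harmonic_kernel mu" "closed A" "z \<in> A"
  shows "mnorm (swept mu A z) = 1"
  using assms unfolding swept_def mnorm_def
  by (simp add: harmonic_kernelD(3) open_Diff measure_return)

lemma mnorm_swept_mono:
  assumes mu: "harmonic_kernel mu" and "closed B" "closed C" "B \<subseteq> C"
  shows "mnorm (swept mu B y) \<le> mnorm (swept mu C y)"
proof -
  let ?U = "UNIV - B" and ?V = "UNIV - C"
  have open_UV: "open ?U" "open ?V" and "?V \<subseteq> ?U"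
    using assms by (auto simp: open_Diff)
  note fin = harmonic_kernelD(1)[OF mu]
  have "ennreal (mnorm (mu ?U y)) = (\<integral>\<^sup>+ z. emeasure (mu ?U z) UNIV \<partial>completion (mu ?V y))"
    using harmonic_kernelD(4)[OF mu open_UV \<open>?V \<subseteq> ?U\<close>, where x=y and E=UNIV]
    by (simp add: emeasure_UNIV_eq_mnorm[OF fin[OF open_UV(1)]])
  also have "\<dots> \<le> (\<integral>\<^sup>+ z. 1 \<partial>completion (mu ?V y))"
    using harmonic_kernelD(2)[OF mu open_UV(1)]
    by (intro nn_integral_mono) (simp add: emeasure_UNIV_eq_mnorm[OF fin[OF open_UV(1)]])
  also have "\<dots> = emeasure (mu ?V y) UNIV"
    using sets.top[of "mu ?V y"] by (simp add: fin_borel_space[OF fin[OF open_UV(2)]] emeasure_completion)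
  also have "\<dots> = ennreal (mnorm (mu ?V y))"
    by (rule emeasure_UNIV_eq_mnorm[OF fin[OF open_UV(2)]])
  finally show ?thesis
    unfolding swept_def by (simp add: ennreal_le_iff mnorm_def)
qed

lemma closure_ball_subset_cball: "closure (ball x e) \<subseteq> cball x e"
  by (intro closure_minimal) auto

lemma cball_subset_if_less_R0:
  assumes "ereal r < R0 X0 x"
  shows "cball x r \<subseteq> X0"
proof -
  obtain r' where "r < r'" "closure (ball x r') \<subseteq> X0"
    using assms unfolding R0_def by (auto simp: less_Sup_iff)
  then show ?thesis
    using closure_subset by fastforce
qed

lemma ball_in_rel_compact_opens:
  assumes "ereal r < R0 X0 x" "s \<le> r"
  shows "ball x s \<in> rel_compact_opens X0"
proof -
  have "closure (ball x s) \<subseteq> cball x r"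
    using closure_ball_subset_cball[of x s] assms(2) by auto
  then show ?thesis
    unfolding rel_compact_opens_def using cball_subset_if_less_R0[OF assms(1)] by auto
qed

text \<open>The measure \<nu> of (G1).\<close>
definition sandwiching_measure ::
    "('a::topological_space set \<Rightarrow> 'a \<Rightarrow> 'a measure) \<Rightarrow> ('a \<Rightarrow> 'a \<Rightarrow> ennreal) \<Rightarrow> real \<Rightarrow>
      'a set \<Rightarrow> 'a set \<Rightarrow> 'a measure \<Rightarrow> bool" where
  "sandwiching_measure mu G c1 A B \<nu> \<longleftrightarrow> fin_borel \<nu> \<and> emeasure \<nu> (UNIV - B) = 0 \<and>
     (\<forall>y. ennreal (mnorm (swept mu A y)) \<le> Gpot G \<nu> y \<and> Gpot G \<nu> y \<le> ennreal (c1 * mnorm (swept mu B y)))"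

lemma G1_obtains_sandwiching_measures:
  assumes "G1 mu G X0"
  obtains c1 where "1 \<le> c1"
    and "\<And>U x A. U \<in> rel_compact_opens X0 \<Longrightarrow> x \<in> U \<Longrightarrow> closed A \<Longrightarrow> A \<subseteq> U \<Longrightarrow>
           \<exists>B \<nu>. closed B \<and> B \<subseteq> U \<and> sandwiching_measure mu G c1 A B \<nu>"
proof -
  obtain c1 where "1 \<le> c1" and G1: "\<forall>U\<in>rel_compact_opens X0. \<forall>x\<in>U. \<forall>\<delta>::real. \<delta> > 0 \<longrightarrow>
       (\<forall>A. closed A \<and> A \<subseteq> U \<longrightarrow>
         (\<exists>B \<nu>. closed B \<and> B \<subseteq> U \<and> A \<subseteq> interior B \<and>
            fin_borel \<nu> \<and> emeasure \<nu> (UNIV - B) = 0 \<and>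
            mnorm (swept mu B x) - \<delta> < c1 * mnorm (swept mu A x) \<and>
            (\<forall>y. ennreal (mnorm (swept mu A y)) \<le> Gpot G \<nu> y \<and>
                 Gpot G \<nu> y \<le> ennreal (c1 * mnorm (swept mu B y)))))"
    using assms unfolding G1_def by (elim exE conjE) (rule that)
  show thesis
  proof (rule that[OF \<open>1 \<le> c1\<close>])
    fix U x A assume "U \<in> rel_compact_opens X0" "x \<in> U" "closed A" "A \<subseteq> U"
    from G1[rule_format, OF this(1,2) zero_less_one conjI[OF this(3,4)]]
    show "\<exists>B \<nu>. closed B \<and> B \<subseteq> U \<and> sandwiching_measure mu G c1 A B \<nu>"
      unfolding sandwiching_measure_def by blast
  qed
qed

lemma G3_iff:
  "G3 G g X0 \<longleftrightarrow> (\<exists>c2\<ge>1. \<forall>x\<in>X0. \<forall>r. 0 < r \<and> ereal r < R0 X0 x \<longrightarrow>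
      inverse (g r) \<le> ennreal c2 * cap G (ball x r))"
  unfolding G3_def
  by (intro ex_cong1 conj_cong refl) (simp_all add: ennreal_inverse_scale_le_iff)

lemma G3bar_iff:
  "G3bar mu G g X0 \<longleftrightarrow> (\<exists>c2\<ge>1. \<forall>x\<in>X0. \<forall>r. 0 < r \<and> ereal r < R0 X0 x \<longrightarrow>
      (\<forall>y. y \<notin> ball x r \<longrightarrow>
         inverse (g r) * G y x \<le> ennreal c2 * ennreal (mnorm (swept mu (closure (ball x r)) y))))"
  unfolding G3bar_def
  by (intro ex_cong1 conj_cong refl) (simp_all add: ennreal_inverse_scale_le_iff mult.assoc)

locale G2_comparison =
  fixes G :: "'a::{metric_space, second_countable_topology} \<Rightarrow> 'a \<Rightarrow> ennreal"
    and g :: "real \<Rightarrow> ennreal" and c cD :: real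
  assumes g_decreasing: "\<And>s t. 0 \<le> s \<Longrightarrow> s < t \<Longrightarrow> g t < g s"
    and g_pos: "\<And>t. 0 \<le> t \<Longrightarrow> 0 < g t"
    and c_ge_1: "1 \<le> c" and cD_ge_1: "1 \<le> cD"
    and g_doubling: "\<And>r. 0 < r \<Longrightarrow> g (r/2) \<le> ennreal cD * g r"
    and g_le_G: "\<And>x y. ennreal (1/c) * g (dist x y) \<le> G x y"
    and G_le_g: "\<And>x y. G x y \<le> ennreal c * g (dist x y)"
begin

lemma c_pos: "0 < c" and cD_pos: "0 < cD"
  using c_ge_1 cD_ge_1 by simp_all

lemma g_antimono: "0 \<le> s \<Longrightarrow> s \<le> t \<Longrightarrow> g t \<le> g s"
  using g_decreasing by (cases "s = t") (auto intro: less_imp_le)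

lemma g_finite: "0 < t \<Longrightarrow> g t < top"
  using g_decreasing[of 0 t] by (simp add: less_le_trans)

lemma g_le_c_G: "g (dist x y) \<le> ennreal c * G x y"
  using g_le_G c_ge_1 by (simp add: ennreal_inverse_scale_le_iff)

lemma G_pos: "0 < G x y"
proof -
  have "0 < ennreal (1/c) * g (dist x y)"
    using g_pos[of "dist x y"] c_ge_1 by (simp add: ennreal_zero_less_mult_iff)
  then show ?thesis
    using g_le_G by (rule less_le_trans)
qed

lemma G_finite: "x \<noteq> y \<Longrightarrow> G x y < top"
  using G_le_g[of x y] g_finite[of "dist x y"]
  by (simp add: ennreal_mult_less_top le_less_trans)

lemma G_quasi_symmetric: "G z w \<le> ennreal (c*c) * G w z"
proof -
  have "G z w \<le> ennreal c * g (dist w z)"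
    using G_le_g[of z w] by (simp add: dist_commute)
  also have "\<dots> \<le> ennreal c * (ennreal c * G w z)"
    by (intro mult_left_mono g_le_c_G) simp
  finally show ?thesis
    using c_ge_1 by (simp add: ennreal_mult mult.assoc)
qed

lemma inverse_g_le_half: "0 < r \<Longrightarrow> inverse (g r) \<le> ennreal cD * inverse (g (r/2))"
proof -
  assume "0 < r"
  have "inverse (ennreal cD * g r) \<le> inverse (g (r/2))"
    using g_doubling[OF \<open>0 < r\<close>] by (rule ennreal_inverse_antimono)
  moreover have "inverse (ennreal cD * g r) = ennreal (1/cD) * inverse (g r)"
    using cD_ge_1 g_finite[OF \<open>0 < r\<close>]
    by (simp add: ennreal_inverse_mult inverse_ennreal inverse_eq_divide)
  ultimately show ?thesis
    using cD_ge_1 by (simp add: ennreal_inverse_scale_le_iff)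
qed

lemma G_near_pole_le: "2 * dist x w < dist x y \<Longrightarrow> G y w \<le> ennreal (c*c*cD) * G y x"
proof -
  assume near: "2 * dist x w < dist x y"
  define d where "d = dist y x"
  have "0 < d" "d/2 \<le> dist y w"
    using near dist_triangle[of y x w] unfolding d_def by (auto simp: dist_commute)
  then have "g (dist y w) \<le> ennreal cD * g d"
    using g_antimono[of "d/2" "dist y w"] g_doubling[of d] by (auto intro: order_trans)
  also have "\<dots> \<le> ennreal cD * (ennreal c * G y x)"
    unfolding d_def by (intro mult_left_mono g_le_c_G) simp
  finally have "ennreal c * g (dist y w) \<le> ennreal c * (ennreal cD * (ennreal c * G y x))"
    by (intro mult_left_mono) simp_all
  then show ?thesis
    using G_le_g[of y w] c_ge_1 cD_ge_1 by (simp add: ennreal_mult mult_ac)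
qed

lemma G_le_near_pole: "dist x w \<le> dist x y \<Longrightarrow> x \<noteq> y \<Longrightarrow> G y x \<le> ennreal (c*c*cD) * G y w"
proof -
  assume near: "dist x w \<le> dist x y" "x \<noteq> y"
  define d where "d = dist y x"
  have "0 < d" "dist y w \<le> 2 * d"
    using near dist_triangle[of y w x] unfolding d_def by (auto simp: dist_commute)
  have "G y x \<le> ennreal c * g d"
    unfolding d_def by (rule G_le_g)
  also have "\<dots> \<le> ennreal c * (ennreal cD * g (2*d))"
    using g_doubling[of "2*d"] \<open>0 < d\<close> by (intro mult_left_mono) simp_all
  also have "\<dots> \<le> ennreal c * (ennreal cD * g (dist y w))"
    using \<open>dist y w \<le> 2 * d\<close> by (intro mult_left_mono g_antimono) simp_all
  also have "\<dots> \<le> ennreal c * (ennreal cD * (ennreal c * G y w))"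
    by (intro mult_left_mono g_le_c_G) simp_all
  finally show ?thesis
    using c_ge_1 cD_ge_1 by (simp add: ennreal_mult mult_ac)
qed

lemma sandwiching_measureD:
  assumes "sandwiching_measure mu G c1 A B \<nu>"
  shows "fin_borel \<nu>" "emeasure \<nu> (UNIV - B) = 0"
    and "ennreal (mnorm (swept mu A y)) \<le> Gpot G \<nu> y"
    and "Gpot G \<nu> y \<le> ennreal (c1 * mnorm (swept mu B y))"
  using assms unfolding sandwiching_measure_def by auto

lemma swept_mass_lower_bound:
  assumes mu: "harmonic_kernel mu" and Gm: "case_prod G \<in> borel_measurable borel"
    and \<nu>: "sandwiching_measure mu G c1 (cball x (r/2)) B \<nu>"
    and B: "closed B" "B \<subseteq> ball x r"
    and cap: "inverse (g (r/2)) \<le> ennreal c2 * cap G (ball x (r/2))"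
    and r: "0 < r" "r \<le> dist x y" and "0 \<le> c1" "0 \<le> c2"
  shows "inverse (g r) * G y x
    \<le> ennreal (cD * c2 * (c*c) * (c*c*cD) * c1) * ennreal (mnorm (swept mu (closure (ball x r)) y))"
proof -
  note fin = sandwiching_measureD(1)[OF \<nu>] and carried = sandwiching_measureD(2)[OF \<nu>]
  have B_borel: "B \<in> sets borel"
    using B(1) by simp
  have cap_le: "cap G (ball x (r/2)) \<le> ennreal (c*c) * emeasure \<nu> UNIV"
  proof (rule cap_le_mass_if_potential_ge_1[OF Gm fin G_quasi_symmetric])
    fix z assume "z \<in> ball x (r/2)"
    then have "mnorm (swept mu (cball x (r/2)) z) = 1"
      by (intro mnorm_swept_eq_1[OF mu]) auto
    then show "1 \<le> Gpot G \<nu> z"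
      using sandwiching_measureD(3)[OF \<nu>, of z] by simp
  qed
  have pot_ge: "G y x * emeasure \<nu> UNIV \<le> ennreal (c*c*cD) * Gpot G \<nu> y"
    using B(2) r by (intro Gpot_ge_on_carrier[OF Gm fin B_borel carried] G_le_near_pole) auto
  have "mnorm (swept mu B y) \<le> mnorm (swept mu (closure (ball x r)) y)"
    using B closure_subset by (intro mnorm_swept_mono[OF mu]) auto
  then have "ennreal (c1 * mnorm (swept mu B y)) \<le> ennreal (c1 * mnorm (swept mu (closure (ball x r)) y))"
    using \<open>0 \<le> c1\<close> by (intro ennreal_leI mult_left_mono)
  then have pot_le: "Gpot G \<nu> y \<le> ennreal c1 * ennreal (mnorm (swept mu (closure (ball x r)) y))"
    using order_trans[OF sandwiching_measureD(4)[OF \<nu>, of y]] \<open>0 \<le> c1\<close> by (simp add: ennreal_mult')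
  have "inverse (g r) * G y x \<le> ennreal cD * inverse (g (r/2)) * G y x"
    using inverse_g_le_half[OF r(1)] by (rule mult_right_mono) simp
  also have "\<dots> \<le> ennreal cD * (ennreal c2 * (ennreal (c*c) * emeasure \<nu> UNIV)) * G y x"
    using order_trans[OF cap mult_left_mono[OF cap_le]] by (intro mult_right_mono mult_left_mono) simp_all
  also have "\<dots> = ennreal (cD * c2 * (c*c)) * (G y x * emeasure \<nu> UNIV)"
    using c_pos cD_pos \<open>0 \<le> c2\<close> by (simp add: ennreal_mult mult_ac)
  also have "\<dots> \<le> ennreal (cD * c2 * (c*c)) *
      (ennreal (c*c*cD) * (ennreal c1 * ennreal (mnorm (swept mu (closure (ball x r)) y))))"
    using order_trans[OF pot_ge mult_left_mono[OF pot_le]] by (intro mult_left_mono) simp_all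
  also have "\<dots> = ennreal (cD * c2 * (c*c) * (c*c*cD) * c1) * ennreal (mnorm (swept mu (closure (ball x r)) y))"
    using c_pos cD_pos \<open>0 \<le> c1\<close> \<open>0 \<le> c2\<close> by (simp add: ennreal_mult mult_ac)
  finally show ?thesis .
qed

lemma inverse_g_le_cap:
  assumes mu: "harmonic_kernel mu" and Gm: "case_prod G \<in> borel_measurable borel"
    and \<nu>: "sandwiching_measure mu G c1 (closure (ball x (r/4))) B \<nu>"
    and B: "closed B" "B \<subseteq> ball x (r/2)"
    and swept: "inverse (g (r/4)) * G y x \<le> ennreal c2 * ennreal (mnorm (swept mu (closure (ball x (r/4))) y))"
    and r: "0 < r" "r \<le> dist x y" and "0 < c1" "0 \<le> c2"
  shows "inverse (g r) \<le> ennreal (cD * cD * c2 * (c*c*cD) * c1) * cap G (ball x r)"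
proof -
  note fin = sandwiching_measureD(1)[OF \<nu>] and carried = sandwiching_measureD(2)[OF \<nu>]
  have B_borel: "B \<in> sets borel"
    using B(1) by simp
  have mass_le: "emeasure \<nu> UNIV \<le> ennreal c1 * cap G (ball x r)"
  proof (rule emeasure_le_cap_if_potential_bounded[OF Gm fin _ _ carried _ \<open>0 < c1\<close>])
    show "UNIV - B \<in> sets borel" "UNIV - ball x r \<subseteq> UNIV - B"
      using B r by auto
    fix z
    have "c1 * mnorm (swept mu B z) \<le> c1"
      using mnorm_swept_le_1[OF mu B(1)] \<open>0 < c1\<close> by simp
    then show "Gpot G \<nu> z \<le> ennreal c1"
      using sandwiching_measureD(4)[OF \<nu>, of z] by (auto intro: order_trans ennreal_leI)
  qed
  have pot_le: "Gpot G \<nu> y \<le> ennreal (c*c*cD) * G y x * emeasure \<nu> UNIV"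
    using B(2) r by (intro Gpot_le_on_carrier[OF fin B_borel carried] G_near_pole_le) auto
  have "y \<noteq> x"
    using r by auto
  then have G_yx: "G y x \<noteq> 0" "G y x \<noteq> top"
    using G_pos[of y x] G_finite[of y x] by auto
  have "G y x * inverse (g (r/4)) \<le> G y x * (ennreal (c2 * (c*c*cD)) * emeasure \<nu> UNIV)"
  proof -
    have "inverse (g (r/4)) * G y x \<le> ennreal c2 * Gpot G \<nu> y"
      using order_trans[OF swept mult_left_mono[OF sandwiching_measureD(3)[OF \<nu>]]] by simp
    also have "\<dots> \<le> ennreal c2 * (ennreal (c*c*cD) * G y x * emeasure \<nu> UNIV)"
      using pot_le by (rule mult_left_mono) simp
    finally show ?thesis
      using c_pos cD_pos \<open>0 \<le> c2\<close> by (simp add: ennreal_mult mult_ac)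
  qed
  then have quarter: "inverse (g (r/4)) \<le> ennreal (c2 * (c*c*cD)) * emeasure \<nu> UNIV"
    using G_yx by (simp add: ennreal_mult_le_mult_iff)
  have "inverse (g r) \<le> ennreal cD * (ennreal cD * inverse (g (r/4)))"
    using order_trans[OF inverse_g_le_half mult_left_mono[OF inverse_g_le_half]] r(1) by simp
  also have "\<dots> \<le> ennreal cD * (ennreal cD * (ennreal (c2 * (c*c*cD)) * (ennreal c1 * cap G (ball x r))))"
    using order_trans[OF quarter mult_left_mono[OF mass_le]] by (intro mult_left_mono) simp_all
  also have "\<dots> = ennreal (cD * cD * c2 * (c*c*cD) * c1) * cap G (ball x r)"
    using c_pos cD_pos \<open>0 < c1\<close> \<open>0 \<le> c2\<close> by (simp add: ennreal_mult mult_ac)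
  finally show ?thesis .
qed

lemma G3bar_if_G3:
  assumes mu: "harmonic_kernel mu" and Gm: "case_prod G \<in> borel_measurable borel"
    and "G1 mu G X0" and "G3 G g X0"
  shows "G3bar mu G g X0"
proof -
  obtain c1 where c1: "1 \<le> c1" and sandwich: "\<And>U x A. U \<in> rel_compact_opens X0 \<Longrightarrow> x \<in> U \<Longrightarrow>
      closed A \<Longrightarrow> A \<subseteq> U \<Longrightarrow>
      \<exists>B \<nu>. closed B \<and> B \<subseteq> U \<and> sandwiching_measure mu G c1 A B \<nu>"
    using G1_obtains_sandwiching_measures[OF \<open>G1 mu G X0\<close>] by blast
  obtain c2 where c2: "1 \<le> c2" and G3: "\<And>x r. x \<in> X0 \<Longrightarrow> 0 < r \<Longrightarrow> ereal r < R0 X0 x \<Longrightarrow>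
      inverse (g r) \<le> ennreal c2 * cap G (ball x r)"
    using \<open>G3 G g X0\<close> unfolding G3_iff by blast
  show ?thesis
    unfolding G3bar_iff
  proof (intro exI[of _ "cD * c2 * (c*c) * (c*c*cD) * c1"] conjI ballI allI impI)
    show "1 \<le> cD * c2 * (c*c) * (c*c*cD) * c1"
      using c_ge_1 cD_ge_1 c1 c2 by (intro mult_ge1_I) auto
    fix x r y assume x: "x \<in> X0" and r: "0 < r \<and> ereal r < R0 X0 x" and "y \<notin> ball x r"
    have "ereal (r/2) < R0 X0 x"
      using r by (auto intro: le_less_trans[of _ "ereal r"])
    then have cap: "inverse (g (r/2)) \<le> ennreal c2 * cap G (ball x (r/2))"
      using G3[OF x] r by simp
    have "cball x (r/2) \<subseteq> ball x r"
      using r by auto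
    then obtain B \<nu> where "closed B" "B \<subseteq> ball x r" "sandwiching_measure mu G c1 (cball x (r/2)) B \<nu>"
      using sandwich[OF ball_in_rel_compact_opens[of r X0 x r], of x "cball x (r/2)"] r by auto
    then show "inverse (g r) * G y x \<le> ennreal (cD * c2 * (c*c) * (c*c*cD) * c1) *
        ennreal (mnorm (swept mu (closure (ball x r)) y))"
      using \<open>y \<notin> ball x r\<close> r c1 c2 by (intro swept_mass_lower_bound[OF mu Gm _ _ _ cap]) auto
  qed
qed

text \<open>(G3bar) is applied at a fixed point y \<notin> X_0, which is at distance at least r from x
  because the closed ball of radius r around x lies in X_0.\<close>
lemma G3_if_G3bar:
  assumes mu: "harmonic_kernel mu" and Gm: "case_prod G \<in> borel_measurable borel"
    and "G1 mu G X0" and "X0 \<noteq> UNIV" and "G3bar mu G g X0"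
  shows "G3 G g X0"
proof -
  obtain c1 where c1: "1 \<le> c1" and sandwich: "\<And>U x A. U \<in> rel_compact_opens X0 \<Longrightarrow> x \<in> U \<Longrightarrow>
      closed A \<Longrightarrow> A \<subseteq> U \<Longrightarrow>
      \<exists>B \<nu>. closed B \<and> B \<subseteq> U \<and> sandwiching_measure mu G c1 A B \<nu>"
    using G1_obtains_sandwiching_measures[OF \<open>G1 mu G X0\<close>] by blast
  obtain c2 where c2: "1 \<le> c2" and G3bar: "\<And>x r y. x \<in> X0 \<Longrightarrow> 0 < r \<Longrightarrow> ereal r < R0 X0 x \<Longrightarrow>
      y \<notin> ball x r \<Longrightarrow> inverse (g r) * G y x \<le> ennreal c2 * ennreal (mnorm (swept mu (closure (ball x r)) y))"
    using \<open>G3bar mu G g X0\<close> unfolding G3bar_iff by blast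
  obtain y where "y \<notin> X0"
    using \<open>X0 \<noteq> UNIV\<close> by blast
  show ?thesis
    unfolding G3_iff
  proof (intro exI[of _ "cD * cD * c2 * (c*c*cD) * c1"] conjI ballI allI impI)
    show "1 \<le> cD * cD * c2 * (c*c*cD) * c1"
      using c_ge_1 cD_ge_1 c1 c2 by (intro mult_ge1_I) auto
    fix x r assume x: "x \<in> X0" and r: "0 < r \<and> ereal r < R0 X0 x"
    have "r \<le> dist x y"
      using cball_subset_if_less_R0[of r X0 x] r \<open>y \<notin> X0\<close> by (auto simp: subset_eq)
    have "ereal (r/4) < R0 X0 x"
      using r by (auto intro: le_less_trans[of _ "ereal r"])
    then have swept: "inverse (g (r/4)) * G y x
        \<le> ennreal c2 * ennreal (mnorm (swept mu (closure (ball x (r/4))) y))"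
      using G3bar[OF x] r \<open>r \<le> dist x y\<close> by simp
    have "closure (ball x (r/4)) \<subseteq> ball x (r/2)"
      using closure_ball_subset_cball[of x "r/4"] r by auto
    then obtain B \<nu> where "closed B" "B \<subseteq> ball x (r/2)"
        "sandwiching_measure mu G c1 (closure (ball x (r/4))) B \<nu>"
      using sandwich[OF ball_in_rel_compact_opens[of r X0 x "r/2"], of x "closure (ball x (r/4))"] r
      by auto
    then show "inverse (g r) \<le> ennreal (cD * cD * c2 * (c*c*cD) * c1) * cap G (ball x r)"
      using r \<open>r \<le> dist x y\<close> c1 c2 by (intro inverse_g_le_cap[OF mu Gm _ _ _ swept]) auto
  qed
qed

end

theorem proposition4p6:
  fixes mu :: "'a::{metric_space, second_countable_topology} set \<Rightarrow> 'a \<Rightarrow> 'a measure"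
    and G :: "'a \<Rightarrow> 'a \<Rightarrow> ennreal"
    and g :: "real \<Rightarrow> ennreal"
    and X0 :: "'a set"
  assumes "open X0"
    and "harmonic_kernel mu"
    and "case_prod G \<in> borel_measurable borel"
    and "\<forall>x y. G x y > 0"
    and "G1 mu G X0"
    and "G2 G g"
  shows "(G3 G g X0 \<longrightarrow> G3bar mu G g X0) \<and>
         (X0 \<noteq> UNIV \<and> G3bar mu G g X0 \<longrightarrow> G3 G g X0)"
proof -
  have g_props: "(\<forall>s t. 0 \<le> s \<and> s < t \<longrightarrow> g t < g s) \<and> (\<forall>t\<ge>0. g t > 0)"
    using \<open>G2 G g\<close> unfolding G2_def by (elim conjE) (intro conjI)
  obtain c cD where "1 \<le> c" "1 \<le> cD" and g_doubling: "\<forall>r>0. g (r/2) \<le> ennreal cD * g r"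
    and G_comparable: "\<forall>x y. ennreal (1/c) * g (dist x y) \<le> G x y \<and> G x y \<le> ennreal c * g (dist x y)"
    using \<open>G2 G g\<close> unfolding G2_def by (elim exE conjE) (rule that)
  interpret G2_comparison G g c cD
    using g_props \<open>1 \<le> c\<close> \<open>1 \<le> cD\<close> g_doubling G_comparable by unfold_locales auto
  show ?thesis
    using G3bar_if_G3[OF assms(2,3,5)] G3_if_G3bar[OF assms(2,3,5)] by blast
qed

end
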